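(* Let $\epsilon\ge0$, consider prices with $T=1$ and $k_1>\epsilon$, and use the notation $k_0=\epsilon$, $\underline r_0=\underline S_0-2\epsilon$, $\overline r_0=\overline S_0$. Suppose that (i) $\frac{\overline r_l-\underline r_j}{k_l-k_j}\ge\frac{\underline r_j-\overline r_i}{k_j-k_i}$ for all $0\le i<j<l\le N$, (ii) $\frac{\overline r_l-\underline r_i}{k_l-k_i}\ge-1$ for all $0\le i<l\le N$, (iii) $\underline r_j\le\overline r_i$ for all $0\le i<j\le N$, but that there exist $0\le i<j\le N$ with $\overline r_i=\underline r_j>0$. Then the prices admit a weak arbitrage opportunity with respect to spread-bound $\epsilon$ (in particular, no model-independent arbitrage).
   Context: Setting (data) with $T=1$: positive bank account value $B(1)$, $D(1)=1/B(1)$; strikes $0<K_1<\dots<K_N$, discounted $k_i=D(1)K_i$; call bid/ask prices $\underline r_i,\overline r_i>0$; underlying bid/ask $0<\underline S_0\le\overline S_0$. Calls are cash-settled with payoff $(S^C_1-K)^+$. A \emph{model} is a finite filtered probability space with adapted processes $\underline S,\overline S,S^C$, $0<\underline S_t\le S^C_t\le\overline S_t$. A \emph{semi-static portfolio} $\Phi$ consists of reals $\phi^0_0,\phi^1_0$, Borel functions $\phi^0_t,\phi^1_t$ of the observed bid/reference/ask prices up to time $t$ ($1\le t\le T$), and reals $\phi^{t,i}$ (numbers of calls bought at time 0). Self-financing: $\phi^0_t=\phi^0_{t-1}+\sum_i\phi^{t,i}(s^C_t-K_{t,i})^+-(\phi^1_t-\phi^1_{t-1})^+\overline s_t+(\phi^1_t-\phi^1_{t-1})^-\underline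 s_t$. Initial value $r_\Phi=\phi^0_0+(\phi^1_0)^+\overline S_0-(\phi^1_0)^-\underline S_0+\sum_{t,i}((\phi^{t,i})^+\overline r_{t,i}-(\phi^{t,i})^-\underline r_{t,i})$. \emph{Model-independent arbitrage w.r.t. spread-bound $\epsilon$}: a self-financing $\Phi$ with $r_\Phi<0$ and $\phi^0_T\ge0$, $\phi^1_T=0$ for all price values with $0<\underline s_t\le s^C_t\le\overline s_t$, $\overline s_t-\underline s_t\le\epsilon B(t)$, $s^C_t\ge\epsilon B(t)$. \emph{Weak arbitrage w.r.t. spread-bound $\epsilon$}: there is no model-independent arbitrage, but for every model satisfying $\overline S_t-\underline S_t\le\epsilon B(t)$ and $S^C_t\ge\epsilon B(t)$ there is a (self-financing) semi-static $\Phi$ with $r_\Phi\le0$, $\phi^0_T\ge0$ a.s., $\mathbb P(\phi^0_T>0)>0$, and $\phi^1_T=0$ a.s., where $\phi^0_T,\phi^1_T$ are evaluated at the model's price paths. *)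

theory Defs
  imports "HOL-Probability.Probability"
begin

text \<open>Market data:
  B1 (bank account value B(1) > 0, discount factor D(1) = 1/B1),
  N strikes K 1 < ... < K N (indices 1..N), call bid prices rb i, call ask prices ra i,
  underlying bid/ask Sb0 \<le> Sa0 at time 0.
  Prices observed at time 1 are triples (sb, sC, sa): bid, reference, ask.\<close>

definition pos :: "real \<Rightarrow> real" where "pos x = max x 0"
definition neg :: "real \<Rightarrow> real" where "neg x = max (- x) 0"

text \<open>A semi-static portfolio for T = 1:
  p00 = phi^0_0, p10 = phi^1_0 (reals), p01 = phi^0_1 and p11 = phi^1_1 (functions of the
  observed time-1 prices (sb, sC, sa)), and h i = phi^{1,i} (number of calls with strike K i
  bought at time 0, i = 1..N).\<close>
record portfolio =
  p00 :: real
  p10 :: real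
  p01 :: "real \<Rightarrow> real \<Rightarrow> real \<Rightarrow> real"
  p11 :: "real \<Rightarrow> real \<Rightarrow> real \<Rightarrow> real"
  h   :: "nat \<Rightarrow> real"

definition borel_portfolio :: "portfolio \<Rightarrow> bool" where
  "borel_portfolio \<Phi> \<longleftrightarrow>
     (\<lambda>x::real \<times> real \<times> real. p01 \<Phi> (fst x) (fst (snd x)) (snd (snd x))) \<in> borel_measurable borel \<and>
     (\<lambda>x::real \<times> real \<times> real. p11 \<Phi> (fst x) (fst (snd x)) (snd (snd x))) \<in> borel_measurable borel"

text \<open>Self-financing condition at time 1 (phi^0 counted in units of the bank account,
  so time-1 cash flows are converted with the discount factor D(1) = 1/B1).\<close>
definition self_financing ::
  "real \<Rightarrow> nat \<Rightarrow> (nat \<Rightarrow> real) \<Rightarrow> portfolio \<Rightarrow> bool" where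
  "self_financing B1 N K \<Phi> \<longleftrightarrow>
     (\<forall>sb sC sa. p01 \<Phi> sb sC sa =
        p00 \<Phi> + (1 / B1) *
          ((\<Sum>i=1..N. h \<Phi> i * pos (sC - K i))
           - pos (p11 \<Phi> sb sC sa - p10 \<Phi>) * sa
           + neg (p11 \<Phi> sb sC sa - p10 \<Phi>) * sb))"

definition init_value ::
  "nat \<Rightarrow> (nat \<Rightarrow> real) \<Rightarrow> (nat \<Rightarrow> real) \<Rightarrow> real \<Rightarrow> real \<Rightarrow> portfolio \<Rightarrow> real" where
  "init_value N rb ra Sb0 Sa0 \<Phi> =
     p00 \<Phi> + pos (p10 \<Phi>) * Sa0 - neg (p10 \<Phi>) * Sb0
     + (\<Sum>i=1..N. pos (h \<Phi> i) * ra i - neg (h \<Phi> i) * rb i)"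

definition admissible_prices :: "real \<Rightarrow> real \<Rightarrow> real \<Rightarrow> real \<Rightarrow> real \<Rightarrow> bool" where
  "admissible_prices eps B1 sb sC sa \<longleftrightarrow>
     0 < sb \<and> sb \<le> sC \<and> sC \<le> sa \<and> sa - sb \<le> eps * B1 \<and> sC \<ge> eps * B1"

definition model_independent_arbitrage ::
  "real \<Rightarrow> real \<Rightarrow> nat \<Rightarrow> (nat \<Rightarrow> real) \<Rightarrow> (nat \<Rightarrow> real) \<Rightarrow> (nat \<Rightarrow> real)
   \<Rightarrow> real \<Rightarrow> real \<Rightarrow> bool" where
  "model_independent_arbitrage eps B1 N K rb ra Sb0 Sa0 \<longleftrightarrow>
     (\<exists>\<Phi>. borel_portfolio \<Phi> \<and> self_financing B1 N K \<Phi> \<and>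
          init_value N rb ra Sb0 Sa0 \<Phi> < 0 \<and>
          (\<forall>sb sC sa. admissible_prices eps B1 sb sC sa \<longrightarrow>
               p01 \<Phi> sb sC sa \<ge> 0 \<and> p11 \<Phi> sb sC sa = 0))"

text \<open>Time-0 prices are the given data; for T = 1 the filtration plays no role.\<close>
definition model ::
  "real \<Rightarrow> real \<Rightarrow> nat pmf \<Rightarrow> (nat \<Rightarrow> real) \<Rightarrow> (nat \<Rightarrow> real) \<Rightarrow> (nat \<Rightarrow> real) \<Rightarrow> bool" where
  "model eps B1 M Sb SC Sa \<longleftrightarrow> finite (set_pmf M) \<and>
     (\<forall>\<omega>\<in>set_pmf M. admissible_prices eps B1 (Sb \<omega>) (SC \<omega>) (Sa \<omega>))"

definition weak_arbitrage ::
  "real \<Rightarrow> real \<Rightarrow> nat \<Rightarrow> (nat \<Rightarrow> real) \<Rightarrow> (nat \<Rightarrow> real) \<Rightarrow> (nat \<Rightarrow> real)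
   \<Rightarrow> real \<Rightarrow> real \<Rightarrow> bool" where
  "weak_arbitrage eps B1 N K rb ra Sb0 Sa0 \<longleftrightarrow>
     \<not> model_independent_arbitrage eps B1 N K rb ra Sb0 Sa0 \<and>
     (\<forall>M Sb SC Sa. model eps B1 M Sb SC Sa \<longrightarrow>
        (\<exists>\<Phi>. borel_portfolio \<Phi> \<and> self_financing B1 N K \<Phi> \<and>
             init_value N rb ra Sb0 Sa0 \<Phi> \<le> 0 \<and>
             (\<forall>\<omega>\<in>set_pmf M. p01 \<Phi> (Sb \<omega>) (SC \<omega>) (Sa \<omega>) \<ge> 0 \<and>
                              p11 \<Phi> (Sb \<omega>) (SC \<omega>) (Sa \<omega>) = 0) \<and>
             (\<exists>\<omega>\<in>set_pmf M. p01 \<Phi> (Sb \<omega>) (SC \<omega>) (Sa \<omega>) > 0)))"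

definition kx :: "real \<Rightarrow> real \<Rightarrow> (nat \<Rightarrow> real) \<Rightarrow> nat \<Rightarrow> real" where
  "kx eps B1 K i = (if i = 0 then eps else K i / B1)"
definition rbx :: "real \<Rightarrow> (nat \<Rightarrow> real) \<Rightarrow> real \<Rightarrow> nat \<Rightarrow> real" where
  "rbx eps rb Sb0 i = (if i = 0 then Sb0 - 2 * eps else rb i)"
definition rax :: "(nat \<Rightarrow> real) \<Rightarrow> real \<Rightarrow> nat \<Rightarrow> real" where
  "rax ra Sa0 i = (if i = 0 then Sa0 else ra i)"

end

theory Submission
  imports Defs
begin

(* Both parts concern static positions in the bank account, the calls and the stock, where the
   stock acts as one more call with strike k_0 = eps, ask Sa0 and bid Sb0 - 2 eps.
   A model-independent arbitrage would give such a position whose payoff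
   c + sum_i g_i (x - k_i)^+ is nonnegative for x > k_0 but whose cost at the quotes is negative.
   Conditions (i)-(iii) yield, for every eta > 0, a convex call price function C with slopes in
   [-1, 0] that vanishes for large strikes, lies above the bids at the strikes held short and
   within eta of the asks at the others: an upper envelope of lines through those bids. The slope
   increments of C on the strike grid form a probability measure pricing every call by C, so the
   cost is at least -eta times a constant, and eta -> 0 gives a contradiction.
   The tight pair ask_i = bid_j > 0 gives a zero-cost position in every model: long the stock and
   short call j if i = 0; otherwise the spread long call i, short call j if some state ends above
   K_i, and else short call j, whose premium is then kept in every state. *)

lemma pos_of_nonneg: "0 \<le> x \<Longrightarrow> pos x = x"
  and neg_of_nonneg: "0 \<le> x \<Longrightarrow> neg x = 0"
  by (simp_all add: pos_def neg_def)

lemma pos_mult_scale: "0 < B \<Longrightarrow> pos (x * B - K) = B * pos (x - K / B)"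
  by (simp add: pos_def max_def field_simps mult_le_0_iff)

lemma sum_delta_mult:
  fixes x :: "'a::comm_semiring_1"
  assumes "finite A"
  shows "(\<Sum>n\<in>A. (if n = j then x else 0) * f n) = (if j \<in> A then x * f j else 0)"
proof -
  have "(\<Sum>n\<in>A. (if n = j then x else 0) * f n) = (\<Sum>n\<in>A. if n = j then x * f j else 0)"
    by (rule sum.cong) auto
  then show ?thesis
    using assms by simp
qed

definition affine_envelope :: "'a set \<Rightarrow> ('a \<Rightarrow> real) \<Rightarrow> ('a \<Rightarrow> real) \<Rightarrow> real \<Rightarrow> real" where
  "affine_envelope J a b x = Max (insert 0 ((\<lambda>j. a j + b j * x) ` J))"

lemma affine_envelope_le_iff:
  "finite J \<Longrightarrow> affine_envelope J a b x \<le> c \<longleftrightarrow> 0 \<le> c \<and> (\<forall>j\<in>J. a j + b j * x \<le> c)"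
  by (simp add: affine_envelope_def)

lemma affine_envelope_nonneg: "finite J \<Longrightarrow> 0 \<le> affine_envelope J a b x"
  by (simp add: affine_envelope_def)

lemma affine_envelope_ge: "finite J \<Longrightarrow> j \<in> J \<Longrightarrow> a j + b j * x \<le> affine_envelope J a b x"
  by (simp add: affine_envelope_def)

lemma convex_on_affine_envelope:
  assumes "finite J"
  shows "convex_on UNIV (affine_envelope J a b)"
proof (rule convex_onI)
  fix t x y :: real
  assume t: "0 < t" "t < 1"
  show "affine_envelope J a b ((1 - t) *\<^sub>R x + t *\<^sub>R y)
      \<le> (1 - t) * affine_envelope J a b x + t * affine_envelope J a b y"
    unfolding affine_envelope_le_iff[OF assms]
  proof (intro conjI ballI)
    show "0 \<le> (1 - t) * affine_envelope J a b x + t * affine_envelope J a b y"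
      using t assms by (simp add: affine_envelope_nonneg)
  next
    fix j assume j: "j \<in> J"
    have "a j + b j * ((1 - t) *\<^sub>R x + t *\<^sub>R y) = (1 - t) * (a j + b j * x) + t * (a j + b j * y)"
      by (simp add: algebra_simps)
    also have "\<dots> \<le> (1 - t) * affine_envelope J a b x + t * affine_envelope J a b y"
      using t affine_envelope_ge[OF assms j] by (intro add_mono mult_left_mono) auto
    finally show "a j + b j * ((1 - t) *\<^sub>R x + t *\<^sub>R y)
        \<le> (1 - t) * affine_envelope J a b x + t * affine_envelope J a b y" .
  qed
qed simp

lemma mono_affine_envelope_plus_id:
  assumes "finite J" and slopes: "\<And>j. j \<in> J \<Longrightarrow> -1 \<le> b j"
  shows "mono (\<lambda>x. affine_envelope J a b x + x)"
proof (rule monoI)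
  fix x y :: real
  assume xy: "x \<le> y"
  have "affine_envelope J a b x \<le> affine_envelope J a b y + (y - x)"
    unfolding affine_envelope_le_iff[OF assms(1)]
  proof (intro conjI ballI)
    show "0 \<le> affine_envelope J a b y + (y - x)"
      using xy assms(1) affine_envelope_nonneg[of J a b y] by linarith
  next
    fix j assume j: "j \<in> J"
    have "- (y - x) \<le> b j * y - b j * x"
      using mult_right_mono[OF slopes[OF j], of "y - x"] xy by (simp add: right_diff_distrib)
    then show "a j + b j * x \<le> affine_envelope J a b y + (y - x)"
      using affine_envelope_ge[OF assms(1) j, of a b y] by linarith
  qed
  then show "affine_envelope J a b x + x \<le> affine_envelope J a b y + y" by simp
qed

lemma affine_envelope_vanishes:
  assumes "finite J" and "0 < \<eta>" and slopes: "\<And>j. j \<in> J \<Longrightarrow> b j \<le> -\<eta>"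
  shows "\<exists>Y>x. affine_envelope J a b Y = 0"
proof -
  define S where "S = 1 + (\<Sum>j\<in>J. \<bar>a j\<bar>)"
  define Y where "Y = max x 0 + S / \<eta>"
  have "0 < S / \<eta>"
    using assms(2) by (simp add: S_def add_pos_nonneg sum_nonneg)
  then have Y_gt: "x < Y" and Y_nonneg: "0 \<le> Y"
    by (simp_all add: Y_def)
  have "a j + b j * Y \<le> 0" if j: "j \<in> J" for j
  proof -
    have "\<bar>a j\<bar> \<le> S"
      using assms(1) j member_le_sum[of j J "\<lambda>j. \<bar>a j\<bar>"] by (simp add: S_def)
    also have "\<dots> \<le> \<eta> * Y"
      using assms(2) by (simp add: Y_def distrib_left)
    also have "\<dots> \<le> - b j * Y"
      using slopes[OF j] Y_nonneg by (intro mult_right_mono) auto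
    finally show ?thesis by simp
  qed
  then have "affine_envelope J a b Y \<le> 0"
    by (simp add: affine_envelope_le_iff[OF assms(1)])
  then show ?thesis
    using affine_envelope_nonneg[OF assms(1), of a b Y] Y_gt by (intro exI[of _ Y]) simp
qed

(* The slopes of the linear interpolation of v at the nodes t 0 < ... < t M, continued with
   slope -1 to the left and 0 to the right. Their increments are the weights of a measure of
   total mass 1 whose call prices at the nodes are v (if v M = 0); the weights are nonnegative
   when v is convex with slopes in [-1, 0]. *)
definition grid_slope :: "(nat \<Rightarrow> real) \<Rightarrow> (nat \<Rightarrow> real) \<Rightarrow> nat \<Rightarrow> nat \<Rightarrow> real" where
  "grid_slope t v M m =
     (if m = 0 then -1 else if m \<le> M then (v m - v (m - 1)) / (t m - t (m - 1)) else 0)"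

lemma sum_grid_slope_increments: "(\<Sum>m=0..M. grid_slope t v M (Suc m) - grid_slope t v M m) = 1"
  by (subst sum_Suc_diff) (auto simp: grid_slope_def)

lemma sum_grid_slope_increments_calls:
  fixes t v :: "nat \<Rightarrow> real"
  assumes t_mono: "\<And>m. m < M \<Longrightarrow> t m < t (Suc m)" and v_last: "v M = 0" and "i \<le> M"
  shows "(\<Sum>m=0..M. (grid_slope t v M (Suc m) - grid_slope t v M m) * pos (t m - t i)) = v i"
proof -
  have t_le: "t a \<le> t b" if "a \<le> b" "b \<le> M" for a b
    by (rule lift_Suc_mono_le_ivl[of "{..<M}"]) (use that t_mono in \<open>auto intro: less_imp_le\<close>)
  show ?thesis
    using \<open>i \<le> M\<close>
  proof (induction i rule: inc_induct)
    case base
    then show ?case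
      using v_last t_le by (simp add: pos_def)
  next
    case (step n)
    let ?w = "\<lambda>m. grid_slope t v M (Suc m) - grid_slope t v M m"
    define d where "d = t (Suc n) - t n"
    have d_pos: "0 < d" using t_mono[of n] step by (simp add: d_def)
    have call_diff: "pos (t m - t n) - pos (t m - t (Suc n)) = (if Suc n \<le> m then d else 0)"
      if "m \<le> M" for m
    proof (cases "Suc n \<le> m")
      case True
      then show ?thesis using t_le[OF True that] d_pos by (auto simp: pos_def d_def)
    next
      case False
      then show ?thesis using t_le[of m n] t_le[of m "Suc n"] step by (auto simp: pos_def)
    qed
    have "(\<Sum>m=0..M. ?w m * pos (t m - t n)) - (\<Sum>m=0..M. ?w m * pos (t m - t (Suc n)))
        = (\<Sum>m=0..M. ?w m * (pos (t m - t n) - pos (t m - t (Suc n))))"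
      by (simp add: sum_subtractf[symmetric] right_diff_distrib)
    also have "\<dots> = (\<Sum>m=0..M. if Suc n \<le> m then ?w m * d else 0)"
      by (rule sum.cong) (simp_all add: call_diff)
    also have "\<dots> = (\<Sum>m=Suc n..M. ?w m) * d"
    proof -
      have "{0..M} \<inter> {m. Suc n \<le> m} = {Suc n..M}" by auto
      then show ?thesis by (simp add: sum.If_cases sum_distrib_right)
    qed
    also have "\<dots> = v n - v (Suc n)"
      using step d_pos by (subst sum_Suc_diff) (auto simp: grid_slope_def d_def)
    finally show ?case using step by simp
  qed
qed

lemma grid_slope_increment_nonneg:
  fixes t :: "nat \<Rightarrow> real" and C :: "real \<Rightarrow> real"
  assumes t_mono: "\<And>m. m < M \<Longrightarrow> t m < t (Suc m)"
    and C_convex: "convex_on UNIV C" and C_slope: "mono (\<lambda>x. C x + x)"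
    and C_nonneg: "\<And>x. 0 \<le> C x" and C_last: "C (t M) = 0" and "m \<le> M"
  shows "0 \<le> grid_slope t (\<lambda>m. C (t m)) M (Suc m) - grid_slope t (\<lambda>m. C (t m)) M m"
proof -
  consider "m = 0" "0 < M" | "0 < m" "m < M" | "m = M"
    using \<open>m \<le> M\<close> by linarith
  then show ?thesis
  proof cases
    case 1
    have "C (t 0) + t 0 \<le> C (t 1) + t 1"
      using monoD[OF C_slope] t_mono[OF 1(2)] by simp
    then have "-1 \<le> (C (t 1) - C (t 0)) / (t 1 - t 0)"
      using t_mono[OF 1(2)] by (simp add: field_simps)
    then show ?thesis
      using 1 by (simp add: grid_slope_def)
  next
    case 2
    have "(C (t (m - 1)) - C (t m)) / (t (m - 1) - t m) \<le> (C (t m) - C (t (Suc m))) / (t m - t (Suc m))"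
      using convex_on_slope_le[OF C_convex, of "t (m - 1)" "t (Suc m)" "t m"]
        t_mono[of "m - 1"] t_mono[of m] 2 by simp
    then have "(C (t m) - C (t (m - 1))) / (t m - t (m - 1)) \<le> (C (t (Suc m)) - C (t m)) / (t (Suc m) - t m)"
      by (metis minus_diff_eq minus_divide_divide)
    then show ?thesis
      using 2 by (simp add: grid_slope_def)
  next
    case 3
    have "(C (t M) - C (t (M - 1))) / (t M - t (M - 1)) \<le> 0" if "0 < M"
      using t_mono[of "M - 1"] that C_last C_nonneg[of "t (M - 1)"] by (intro divide_nonpos_pos) auto
    then show ?thesis
      using 3 by (simp add: grid_slope_def)
  qed
qed

lemma price_of_nonneg_payoff_nonneg:
  fixes k g :: "nat \<Rightarrow> real" and C :: "real \<Rightarrow> real"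
  assumes k_mono: "strict_mono_on {..N} k"
    and C_convex: "convex_on UNIV C" and C_slope: "mono (\<lambda>x. C x + x)"
    and C_nonneg: "\<And>x. 0 \<le> C x" and Y: "k N < Y" "C Y = 0"
    and payoff: "\<And>x. k 0 \<le> x \<Longrightarrow> 0 \<le> c + (\<Sum>i=0..N. g i * pos (x - k i))"
  shows "0 \<le> c + (\<Sum>i=0..N. g i * C (k i))"
proof -
  have k_less: "k i < k j" if "i < j" "j \<le> N" for i j
    using strict_mono_onD[OF k_mono] that by simp
  define t where "t m = (if m \<le> N then k m else Y)" for m
  define v where "v m = C (t m)" for m
  define w where "w m = grid_slope t v (Suc N) (Suc m) - grid_slope t v (Suc N) m" for m
  have t_mono: "t m < t (Suc m)" if "m < Suc N" for m
    using that k_less[of m "Suc m"] Y by (cases "m = N") (auto simp: t_def)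
  have w_nonneg: "0 \<le> w m" if "m \<le> Suc N" for m
    unfolding w_def v_def
    using grid_slope_increment_nonneg[where t = t and M = "Suc N" and C = C,
        OF t_mono C_convex C_slope C_nonneg _ that] Y by (simp add: t_def)
  have k_ge: "k 0 \<le> k m" if "m \<le> N" for m
    using strict_mono_on_leD[OF k_mono] that by simp
  have "k 0 \<le> t m" for m
    using k_ge[of m] k_ge[of N] Y by (auto simp: t_def)
  then have "0 \<le> (\<Sum>m=0..Suc N. w m * (c + (\<Sum>i=0..N. g i * pos (t m - k i))))"
    using w_nonneg payoff by (intro sum_nonneg mult_nonneg_nonneg) auto
  also have "\<dots> = c * (\<Sum>m=0..Suc N. w m) + (\<Sum>m=0..Suc N. \<Sum>i=0..N. g i * (w m * pos (t m - t i)))"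
    by (simp add: t_def algebra_simps sum.distrib sum_distrib_left)
  also have "\<dots> = c * (\<Sum>m=0..Suc N. w m) + (\<Sum>i=0..N. g i * (\<Sum>m=0..Suc N. w m * pos (t m - t i)))"
    by (subst sum.swap) (simp only: sum_distrib_left)
  also have "\<dots> = c + (\<Sum>i=0..N. g i * C (k i))"
  proof -
    have "(\<Sum>m=0..Suc N. w m) = 1"
      unfolding w_def by (rule sum_grid_slope_increments)
    moreover have "(\<Sum>m=0..Suc N. w m * pos (t m - t i)) = C (k i)" if "i \<le> N" for i
      using sum_grid_slope_increments_calls[of "Suc N" t v i, OF t_mono] that Y
      by (simp add: w_def v_def t_def)
    ultimately show ?thesis by simp
  qed
  finally show ?thesis .
qed

definition quotes_consistent :: "nat \<Rightarrow> (nat \<Rightarrow> real) \<Rightarrow> (nat \<Rightarrow> real) \<Rightarrow> (nat \<Rightarrow> real) \<Rightarrow> bool" where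
  "quotes_consistent N k ra rb \<longleftrightarrow>
     (\<forall>i j l. i < j \<longrightarrow> j < l \<longrightarrow> l \<le> N \<longrightarrow>
        (rb j - ra i) / (k j - k i) \<le> (ra l - rb j) / (k l - k j)) \<and>
     (\<forall>i l. i < l \<longrightarrow> l \<le> N \<longrightarrow> -1 \<le> (ra l - rb i) / (k l - k i)) \<and>
     (\<forall>i j. i < j \<longrightarrow> j \<le> N \<longrightarrow> rb j \<le> ra i)"

(* Slope of the line through (k j, rb j): it stays below the asks to the right of k j, below
   the asks up to eta per unit of strike to the left, and is at most -eta, so that the line
   eventually becomes negative. *)
definition quote_slope :: "real \<Rightarrow> (nat \<Rightarrow> real) \<Rightarrow> (nat \<Rightarrow> real) \<Rightarrow> (nat \<Rightarrow> real) \<Rightarrow> nat \<Rightarrow> real" where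
  "quote_slope \<eta> k ra rb j =
     min (Max (insert (-1) ((\<lambda>i. (rb j - ra i) / (k j - k i)) ` {..<j}))) (-\<eta>)"

lemma quote_slope_bounds:
  fixes k ra rb :: "nat \<Rightarrow> real" and \<eta> :: real
  defines "\<gamma> \<equiv> quote_slope \<eta> k ra rb"
  assumes k_mono: "strict_mono_on {..N} k"
    and quotes: "quotes_consistent N k ra rb"
    and \<eta>: "0 < \<eta>" "\<eta> \<le> 1"
  shows "-1 \<le> \<gamma> j" and "\<gamma> j \<le> -\<eta>"
    and "i \<le> N \<Longrightarrow> j \<le> N \<Longrightarrow> i \<noteq> j \<Longrightarrow> rb j + \<gamma> j * (k i - k j) \<le> ra i + \<eta> * (k N - k 0)"
proof -
  have k_less: "k i < k j" if "i < j" "j \<le> N" for i j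
    using strict_mono_onD[OF k_mono] that by simp
  have k_le: "k i \<le> k j" if "i \<le> j" "j \<le> N" for i j
    using strict_mono_on_leD[OF k_mono] that by simp
  define \<beta> where "\<beta> j = Max (insert (-1) ((\<lambda>i. (rb j - ra i) / (k j - k i)) ` {..<j}))" for j
  have \<gamma>_eq: "\<gamma> j = min (\<beta> j) (-\<eta>)" for j
    by (simp add: \<gamma>_def \<beta>_def quote_slope_def)
  show "-1 \<le> \<gamma> j"
    using \<eta> by (simp add: \<gamma>_eq \<beta>_def)
  show "\<gamma> j \<le> -\<eta>"
    by (simp add: \<gamma>_eq)
  assume ij: "i \<le> N" "j \<le> N" "i \<noteq> j"
  have spread_nonneg: "0 \<le> \<eta> * (k N - k 0)"
    using \<eta> k_le[of 0 N] by simp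
  consider "j < i" | "i < j"
    using ij(3) by linarith
  then show "rb j + \<gamma> j * (k i - k j) \<le> ra i + \<eta> * (k N - k 0)"
  proof cases
    case 1
    have "\<beta> j \<le> (ra i - rb j) / (k i - k j)"
      unfolding \<beta>_def using quotes 1 ij(1) by (simp add: quotes_consistent_def)
    then have "\<gamma> j \<le> (ra i - rb j) / (k i - k j)"
      by (simp add: \<gamma>_eq)
    then show ?thesis
      using k_less[OF 1 ij(1)] spread_nonneg by (simp add: pos_le_divide_eq)
  next
    case 2
    have "(rb j - ra i) / (k j - k i) \<le> \<beta> j"
      unfolding \<beta>_def using 2 by simp
    moreover have "\<beta> j \<le> 0"
      unfolding \<beta>_def using ij(2) quotes k_less by (simp add: quotes_consistent_def divide_nonpos_pos)
    ultimately have "(rb j - ra i) / (k j - k i) \<le> \<gamma> j + \<eta>"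
      using \<eta> by (auto simp: \<gamma>_eq min_def)
    then have "rb j - ra i \<le> (\<gamma> j + \<eta>) * (k j - k i)"
      using k_less[OF 2 ij(2)] by (simp add: pos_divide_le_eq)
    moreover have "\<eta> * (k j - k i) \<le> \<eta> * (k N - k 0)"
      using k_le[of j N] k_le[of 0 i] ij \<eta> by (intro mult_left_mono) auto
    ultimately show ?thesis
      by (simp add: algebra_simps)
  qed
qed

lemma exists_call_price_function_within_quotes:
  fixes k ra rb :: "nat \<Rightarrow> real" and J :: "nat set" and \<eta> :: real
  assumes k_mono: "strict_mono_on {..N} k"
    and ra_nonneg: "\<forall>i\<le>N. 0 \<le> ra i"
    and quotes: "quotes_consistent N k ra rb"
    and J: "J \<subseteq> {..N}" and \<eta>: "0 < \<eta>" "\<eta> \<le> 1"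
  obtains C :: "real \<Rightarrow> real" and Y :: real
  where "convex_on UNIV C" "mono (\<lambda>x. C x + x)" "\<And>x. 0 \<le> C x" "k N < Y" "C Y = 0"
    and "\<And>j. j \<in> J \<Longrightarrow> rb j \<le> C (k j)"
    and "\<And>i. i \<le> N \<Longrightarrow> i \<notin> J \<Longrightarrow> C (k i) \<le> ra i + \<eta> * (k N - k 0)"
proof -
  define \<gamma> where "\<gamma> = quote_slope \<eta> k ra rb"
  note \<gamma>_bounds = quote_slope_bounds[OF k_mono quotes \<eta>, folded \<gamma>_def]
  have fin: "finite J"
    using J finite_subset by blast
  define C where "C = affine_envelope J (\<lambda>j. rb j - \<gamma> j * k j) \<gamma>"
  have line: "(rb j - \<gamma> j * k j) + \<gamma> j * x = rb j + \<gamma> j * (x - k j)" for j x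
    by (simp add: algebra_simps)
  have C_le_iff: "C x \<le> c \<longleftrightarrow> 0 \<le> c \<and> (\<forall>j\<in>J. rb j + \<gamma> j * (x - k j) \<le> c)" for x c
    unfolding C_def affine_envelope_le_iff[OF fin] line ..
  have C_ge: "rb j + \<gamma> j * (x - k j) \<le> C x" if "j \<in> J" for j x
    using affine_envelope_ge[OF fin that, of "\<lambda>j. rb j - \<gamma> j * k j" \<gamma> x] by (simp add: C_def line)
  have spread_nonneg: "0 \<le> \<eta> * (k N - k 0)"
    using \<eta> strict_mono_on_leD[OF k_mono, of 0 N] by simp
  obtain Y where "k N < Y" "C Y = 0"
    using affine_envelope_vanishes[OF fin \<eta>(1), of \<gamma> "k N"] \<gamma>_bounds(2) unfolding C_def by blast
  moreover have "rb j \<le> C (k j)" if "j \<in> J" for j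
    using C_ge[OF that, of "k j"] by simp
  moreover have "C (k i) \<le> ra i + \<eta> * (k N - k 0)" if "i \<le> N" "i \<notin> J" for i
    unfolding C_le_iff using that J \<gamma>_bounds(3)[of i] ra_nonneg spread_nonneg
    by (auto intro!: add_nonneg_nonneg)
  ultimately show ?thesis
    using that[of C Y] convex_on_affine_envelope[OF fin]
      mono_affine_envelope_plus_id[OF fin \<gamma>_bounds(1)] affine_envelope_nonneg[OF fin]
    by (simp add: C_def)
qed

definition static_payoff :: "nat \<Rightarrow> (nat \<Rightarrow> real) \<Rightarrow> real \<Rightarrow> (nat \<Rightarrow> real) \<Rightarrow> real \<Rightarrow> real" where
  "static_payoff N k c g x = c + (\<Sum>i=0..N. g i * pos (x - k i))"

definition static_cost ::
  "nat \<Rightarrow> (nat \<Rightarrow> real) \<Rightarrow> (nat \<Rightarrow> real) \<Rightarrow> real \<Rightarrow> (nat \<Rightarrow> real) \<Rightarrow> real" where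
  "static_cost N ra rb c g = c + (\<Sum>i=0..N. pos (g i) * ra i - neg (g i) * rb i)"

lemma static_cost_ge_approx:
  fixes k ra rb g :: "nat \<Rightarrow> real" and c \<eta> :: real
  assumes k_mono: "strict_mono_on {..N} k"
    and ra_nonneg: "\<forall>i\<le>N. 0 \<le> ra i"
    and quotes: "quotes_consistent N k ra rb"
    and payoff: "\<And>x. k 0 \<le> x \<Longrightarrow> 0 \<le> static_payoff N k c g x"
    and \<eta>: "0 < \<eta>" "\<eta> \<le> 1"
  shows "- (\<eta> * (k N - k 0) * (\<Sum>i=0..N. pos (g i))) \<le> static_cost N ra rb c g"
proof -
  define J where "J = {j. j \<le> N \<and> g j < 0}"
  obtain C Y where C_convex: "convex_on UNIV C" and C_slope: "mono (\<lambda>x. C x + x)"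
    and C_nonneg: "\<And>x. 0 \<le> C x" and Y: "k N < Y" "C Y = 0"
    and C_bid: "\<And>j. j \<in> J \<Longrightarrow> rb j \<le> C (k j)"
    and C_ask: "\<And>i. i \<le> N \<Longrightarrow> i \<notin> J \<Longrightarrow> C (k i) \<le> ra i + \<eta> * (k N - k 0)"
    by (rule exists_call_price_function_within_quotes[OF k_mono ra_nonneg quotes _ \<eta>, of J])
      (auto simp: J_def)
  have "0 \<le> c + (\<Sum>i=0..N. g i * C (k i))"
    by (rule price_of_nonneg_payoff_nonneg[OF k_mono C_convex C_slope _ Y])
      (use C_nonneg payoff in \<open>auto simp: static_payoff_def\<close>)
  also have "\<dots> \<le> static_cost N ra rb c g + \<eta> * (k N - k 0) * (\<Sum>i=0..N. pos (g i))"
  proof -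
    have "g i * C (k i) \<le> pos (g i) * ra i - neg (g i) * rb i + \<eta> * (k N - k 0) * pos (g i)"
      if i: "i \<le> N" for i
    proof (cases "g i < 0")
      case True
      then have "g i * C (k i) \<le> g i * rb i"
        using C_bid[of i] i by (simp add: J_def)
      then show ?thesis
        using True by (simp add: pos_def neg_def)
    next
      case False
      then have "g i * C (k i) \<le> g i * (ra i + \<eta> * (k N - k 0))"
        using C_ask[OF i] by (intro mult_left_mono) (auto simp: J_def)
      then show ?thesis
        using False by (simp add: pos_def neg_def algebra_simps)
    qed
    then have "(\<Sum>i=0..N. g i * C (k i))
        \<le> (\<Sum>i=0..N. pos (g i) * ra i - neg (g i) * rb i + \<eta> * (k N - k 0) * pos (g i))"
      by (intro sum_mono) simp
    then show ?thesis
      unfolding static_cost_def by (simp add: sum.distrib sum_distrib_left)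
  qed
  finally show ?thesis by simp
qed

lemma nonneg_of_nonneg_at_right:
  fixes a b \<delta> :: real
  assumes "0 < \<delta>" and "\<And>d. 0 < d \<Longrightarrow> d < \<delta> \<Longrightarrow> 0 \<le> a + b * d"
  shows "0 \<le> a"
proof (rule tendsto_lowerbound)
  have "((\<lambda>d. a + b * d) \<longlongrightarrow> a + b * 0) (at_right 0)"
    by (intro tendsto_intros)
  then show "((\<lambda>d. a + b * d) \<longlongrightarrow> a) (at_right 0)"
    by simp
  show "\<forall>\<^sub>F d in at_right 0. 0 \<le> a + b * d"
    unfolding eventually_at_right_field using assms by blast
qed simp

lemma static_payoff_nonneg_at_lowest_strike:
  fixes k g :: "nat \<Rightarrow> real" and c :: real
  assumes "1 \<le> N" and k_mono: "strict_mono_on {..N} k"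
    and payoff: "\<And>x. k 0 < x \<Longrightarrow> 0 \<le> static_payoff N k c g x"
  shows "0 \<le> static_payoff N k c g (k 0)"
proof -
  have k01: "k 0 < k 1"
    using strict_mono_onD[OF k_mono, of 0 1] \<open>1 \<le> N\<close> by simp
  have first_piece: "static_payoff N k c g x = c + g 0 * (x - k 0)" if "k 0 \<le> x" "x \<le> k 1" for x
  proof -
    have "g i * pos (x - k i) = 0" if "i \<in> {1..N}" for i
      using that strict_mono_on_leD[OF k_mono, of 1 i] \<open>x \<le> k 1\<close> by (simp add: pos_def)
    then have "(\<Sum>i=1..N. g i * pos (x - k i)) = 0"
      by (rule sum.neutral[rule_format])
    then show ?thesis
      using that by (simp add: static_payoff_def sum.atLeast_Suc_atMost pos_def)
  qed
  have "0 \<le> c"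
  proof (rule nonneg_of_nonneg_at_right)
    show "0 < k 1 - k 0"
      using k01 by simp
    show "0 \<le> c + g 0 * d" if "0 < d" "d < k 1 - k 0" for d
      using payoff[of "k 0 + d"] first_piece[of "k 0 + d"] that by simp
  qed
  then show ?thesis
    using first_piece[of "k 0"] k01 by simp
qed

lemma static_cost_nonneg:
  fixes k ra rb g :: "nat \<Rightarrow> real" and c :: real
  assumes "1 \<le> N"
    and k_mono: "strict_mono_on {..N} k"
    and ra_nonneg: "\<forall>i\<le>N. 0 \<le> ra i"
    and quotes: "quotes_consistent N k ra rb"
    and payoff: "\<And>x. k 0 < x \<Longrightarrow> 0 \<le> static_payoff N k c g x"
  shows "0 \<le> static_cost N ra rb c g"
proof -
  have payoff_nonneg: "0 \<le> static_payoff N k c g x" if "k 0 \<le> x" for x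
    using that payoff static_payoff_nonneg_at_lowest_strike[OF \<open>1 \<le> N\<close> k_mono payoff]
    by (cases "x = k 0") auto
  have approx: "- (\<eta> * (k N - k 0) * (\<Sum>i=0..N. pos (g i))) \<le> static_cost N ra rb c g"
    if "0 < \<eta>" "\<eta> \<le> 1" for \<eta>
    by (rule static_cost_ge_approx[OF k_mono ra_nonneg quotes _ that]) (rule payoff_nonneg)
  show ?thesis
    by (rule nonneg_of_nonneg_at_right[where b = "(k N - k 0) * (\<Sum>i=0..N. pos (g i))" and \<delta> = 1])
      (use approx in \<open>auto simp: algebra_simps\<close>)
qed

lemma static_payoff_of_model_independent_arbitrage:
  assumes B1: "0 < B1" and eps: "0 \<le> eps"
    and arb: "model_independent_arbitrage eps B1 N K rb ra Sb0 Sa0"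
  shows "\<exists>c g. (\<forall>x>eps. 0 \<le> static_payoff N (kx eps B1 K) c g x)
           \<and> static_cost N (rax ra Sa0) (rbx eps rb Sb0) c g < 0"
proof -
  obtain \<Phi> where sf: "self_financing B1 N K \<Phi>"
    and cost: "init_value N rb ra Sb0 Sa0 \<Phi> < 0"
    and adm: "\<And>sb sC sa. admissible_prices eps B1 sb sC sa \<Longrightarrow> 0 \<le> p01 \<Phi> sb sC sa \<and> p11 \<Phi> sb sC sa = 0"
    using arb unfolding model_independent_arbitrage_def by blast
  define P where "P = p10 \<Phi>"
  define c where "c = p00 \<Phi> - 2 * neg P * eps"
  define g where "g i = (if i = 0 then P else h \<Phi> i)" for i
  have "0 \<le> static_payoff N (kx eps B1 K) c g x" if x: "eps < x" for x
  proof -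
    \<comment> \<open>Liquidate the stock at the worst admissible bid or ask around sC = x B1.\<close>
    define sb where "sb = x * B1 - (if 0 \<le> P then eps * B1 else 0)"
    have "admissible_prices eps B1 sb (x * B1) (sb + eps * B1)"
      using x B1 eps by (auto simp: admissible_prices_def sb_def mult_right_mono)
    then have nonneg: "0 \<le> p01 \<Phi> sb (x * B1) (sb + eps * B1)"
      and no_stock: "p11 \<Phi> sb (x * B1) (sb + eps * B1) = 0"
      using adm by blast+
    have "p01 \<Phi> sb (x * B1) (sb + eps * B1) = p00 \<Phi> + (1 / B1) *
        ((\<Sum>i=1..N. h \<Phi> i * pos (x * B1 - K i)) + (pos P * sb - neg P * (sb + eps * B1)))"
      using sf no_stock unfolding self_financing_def by (simp add: P_def pos_def neg_def)
    also have "pos P * sb - neg P * (sb + eps * B1) = B1 * (P * (x - eps) - 2 * neg P * eps)"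
      by (simp add: sb_def pos_def neg_def algebra_simps)
    also have "(\<Sum>i=1..N. h \<Phi> i * pos (x * B1 - K i)) = B1 * (\<Sum>i=1..N. h \<Phi> i * pos (x - K i / B1))"
      by (simp add: pos_mult_scale[OF B1] sum_distrib_left mult.left_commute)
    finally have "0 \<le> p00 \<Phi> + (\<Sum>i=1..N. h \<Phi> i * pos (x - K i / B1)) + P * (x - eps) - 2 * neg P * eps"
      using nonneg B1 by (simp add: distrib_left[symmetric])
    also have "\<dots> = static_payoff N (kx eps B1 K) c g x"
      using x by (simp add: static_payoff_def sum.atLeast_Suc_atMost g_def kx_def c_def pos_def)
    finally show ?thesis .
  qed
  moreover have "static_cost N (rax ra Sa0) (rbx eps rb Sb0) c g = init_value N rb ra Sb0 Sa0 \<Phi>"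
    by (simp add: static_cost_def init_value_def sum.atLeast_Suc_atMost g_def rax_def rbx_def c_def
        P_def algebra_simps)
  ultimately show ?thesis
    using cost by (intro exI[of _ c] exI[of _ g]) auto
qed

lemma no_model_independent_arbitrage:
  assumes B1: "0 < B1" and eps: "0 \<le> eps" and "1 \<le> N"
    and k_mono: "strict_mono_on {..N} (kx eps B1 K)"
    and ra_nonneg: "\<forall>i\<le>N. 0 \<le> rax ra Sa0 i"
    and quotes: "quotes_consistent N (kx eps B1 K) (rax ra Sa0) (rbx eps rb Sb0)"
  shows "\<not> model_independent_arbitrage eps B1 N K rb ra Sb0 Sa0"
proof
  assume "model_independent_arbitrage eps B1 N K rb ra Sb0 Sa0"
  then obtain c g where payoff: "\<forall>x>eps. 0 \<le> static_payoff N (kx eps B1 K) c g x"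
    and cost: "static_cost N (rax ra Sa0) (rbx eps rb Sb0) c g < 0"
    using static_payoff_of_model_independent_arbitrage[OF B1 eps] by blast
  have "0 \<le> static_cost N (rax ra Sa0) (rbx eps rb Sb0) c g"
    by (rule static_cost_nonneg[OF \<open>1 \<le> N\<close> k_mono ra_nonneg quotes])
      (use payoff in \<open>simp add: kx_def\<close>)
  then show False
    using cost by simp
qed

definition static_portfolio :: "real \<Rightarrow> nat \<Rightarrow> (nat \<Rightarrow> real) \<Rightarrow> real \<Rightarrow> real \<Rightarrow> (nat \<Rightarrow> real) \<Rightarrow> portfolio" where
  "static_portfolio B1 N K a b H =
     \<lparr>p00 = a, p10 = b,
      p01 = (\<lambda>sb sC sa. a + (1 / B1) * ((\<Sum>i=1..N. H i * pos (sC - K i)) + pos b * sb - neg b * sa)),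
      p11 = (\<lambda>_ _ _. 0), h = H\<rparr>"

lemma init_value_static_portfolio:
  "init_value N rb ra Sb0 Sa0 (static_portfolio B1 N K a b H) =
     a + pos b * Sa0 - neg b * Sb0 + (\<Sum>i=1..N. pos (H i) * ra i - neg (H i) * rb i)"
  by (simp add: init_value_def static_portfolio_def)

lemma p01_static_portfolio:
  "p01 (static_portfolio B1 N K a b H) sb sC sa =
     a + (1 / B1) * ((\<Sum>i=1..N. H i * pos (sC - K i)) + pos b * sb - neg b * sa)"
  by (simp add: static_portfolio_def)

lemma static_portfolio_weak_arbitrage:
  fixes B1 a b :: real and N :: nat and K H :: "nat \<Rightarrow> real" and M :: "nat pmf" and Sb SC Sa :: "nat \<Rightarrow> real"
  defines "\<Phi> \<equiv> static_portfolio B1 N K a b H"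
  assumes "init_value N rb ra Sb0 Sa0 \<Phi> \<le> 0"
    and "\<forall>\<omega>\<in>set_pmf M. 0 \<le> p01 \<Phi> (Sb \<omega>) (SC \<omega>) (Sa \<omega>)"
    and "\<exists>\<omega>\<in>set_pmf M. 0 < p01 \<Phi> (Sb \<omega>) (SC \<omega>) (Sa \<omega>)"
  shows "\<exists>\<Phi>. borel_portfolio \<Phi> \<and> self_financing B1 N K \<Phi> \<and>
             init_value N rb ra Sb0 Sa0 \<Phi> \<le> 0 \<and>
             (\<forall>\<omega>\<in>set_pmf M. p01 \<Phi> (Sb \<omega>) (SC \<omega>) (Sa \<omega>) \<ge> 0 \<and>
                              p11 \<Phi> (Sb \<omega>) (SC \<omega>) (Sa \<omega>) = 0) \<and>
             (\<exists>\<omega>\<in>set_pmf M. p01 \<Phi> (Sb \<omega>) (SC \<omega>) (Sa \<omega>) > 0)"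
proof (intro exI conjI)
  show "borel_portfolio \<Phi>"
    unfolding borel_portfolio_def \<Phi>_def static_portfolio_def pos_def neg_def portfolio.select_convs
    by (intro conjI borel_measurable_continuous_onI continuous_intros)
  show "self_financing B1 N K \<Phi>"
    by (simp add: self_financing_def \<Phi>_def static_portfolio_def pos_def neg_def)
qed (use assms in \<open>auto simp: \<Phi>_def static_portfolio_def\<close>)

definition short_call :: "nat \<Rightarrow> nat \<Rightarrow> real" where
  "short_call j n = (if n = j then -1 else 0)"

definition call_spread :: "nat \<Rightarrow> nat \<Rightarrow> nat \<Rightarrow> real" where
  "call_spread i j n = (if n = i then 1 else 0) + short_call j n"

lemma sum_short_call:
  fixes f :: "nat \<Rightarrow> real"
  assumes "j \<in> {1..N}"
  shows "(\<Sum>n=1..N. short_call j n * f n) = - f j"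
    and "(\<Sum>n=1..N. pos (short_call j n) * ra n - neg (short_call j n) * rb n) = - rb j"
proof -
  show "(\<Sum>n=1..N. short_call j n * f n) = - f j"
    using assms by (simp add: short_call_def sum_delta_mult)
  have "pos (short_call j n) * ra n - neg (short_call j n) * rb n = (if n = j then -1 else 0) * rb n" for n
    by (simp add: short_call_def pos_def neg_def)
  then show "(\<Sum>n=1..N. pos (short_call j n) * ra n - neg (short_call j n) * rb n) = - rb j"
    using assms by (simp add: sum_delta_mult)
qed

lemma sum_call_spread:
  fixes f :: "nat \<Rightarrow> real"
  assumes "i \<in> {1..N}" "j \<in> {1..N}" "i \<noteq> j"
  shows "(\<Sum>n=1..N. call_spread i j n * f n) = f i - f j"
    and "(\<Sum>n=1..N. pos (call_spread i j n) * ra n - neg (call_spread i j n) * rb n) = ra i - rb j"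
proof -
  show "(\<Sum>n=1..N. call_spread i j n * f n) = f i - f j"
    unfolding call_spread_def distrib_right sum.distrib sum_short_call(1)[OF assms(2)]
    using assms(1) by (simp add: sum_delta_mult)
  have "pos (call_spread i j n) * ra n - neg (call_spread i j n) * rb n
      = (if n = i then 1 else 0) * ra n + (if n = j then -1 else 0) * rb n" for n
    using assms(3) by (simp add: call_spread_def short_call_def pos_def neg_def)
  then show "(\<Sum>n=1..N. pos (call_spread i j n) * ra n - neg (call_spread i j n) * rb n) = ra i - rb j"
    using assms(1,2) by (simp add: sum.distrib sum_delta_mult)
qed

lemma weak_arbitrage_in_model:
  fixes M :: "nat pmf" and Sb SC Sa :: "nat \<Rightarrow> real"
  assumes B1: "0 < B1"
    and K_mono: "strict_mono_on {1..N} K"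
    and K_gt: "\<forall>j\<in>{1..N}. eps * B1 < K j"
    and ij: "i < j" "j \<le> N" and tight: "rax ra Sa0 i = rbx eps rb Sb0 j" "0 < rbx eps rb Sb0 j"
    and model: "model eps B1 M Sb SC Sa"
  shows "\<exists>\<Phi>. borel_portfolio \<Phi> \<and> self_financing B1 N K \<Phi> \<and>
             init_value N rb ra Sb0 Sa0 \<Phi> \<le> 0 \<and>
             (\<forall>\<omega>\<in>set_pmf M. p01 \<Phi> (Sb \<omega>) (SC \<omega>) (Sa \<omega>) \<ge> 0 \<and>
                              p11 \<Phi> (Sb \<omega>) (SC \<omega>) (Sa \<omega>) = 0) \<and>
             (\<exists>\<omega>\<in>set_pmf M. p01 \<Phi> (Sb \<omega>) (SC \<omega>) (Sa \<omega>) > 0)"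
proof -
  have j: "j \<in> {1..N}" and rb_j: "rbx eps rb Sb0 j = rb j"
    using ij by (auto simp: rbx_def)
  obtain \<omega>\<^sub>0 where \<omega>\<^sub>0: "\<omega>\<^sub>0 \<in> set_pmf M"
    using set_pmf_not_empty by fastforce
  show ?thesis
  proof (cases "i = 0")
    case True
    let ?\<Phi> = "static_portfolio B1 N K 0 1 (short_call j)"
    have "0 < p01 ?\<Phi> (Sb \<omega>) (SC \<omega>) (Sa \<omega>)" if "\<omega> \<in> set_pmf M" for \<omega>
    proof -
      have "pos (SC \<omega> - K j) < Sb \<omega>"
        using model that bspec[OF K_gt j] by (auto simp: model_def admissible_prices_def pos_def)
      then show ?thesis
        unfolding p01_static_portfolio sum_short_call(1)[OF j] using B1 by (simp add: pos_of_nonneg neg_of_nonneg)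
    qed
    moreover have "init_value N rb ra Sb0 Sa0 ?\<Phi> = 0"
      unfolding init_value_static_portfolio sum_short_call(2)[OF j]
      using tight True rb_j by (simp add: rax_def pos_of_nonneg neg_of_nonneg)
    ultimately show ?thesis
      using \<omega>\<^sub>0 by (intro static_portfolio_weak_arbitrage) (auto intro: less_imp_le)
  next
    case False
    then have i: "i \<in> {1..N}" and "i \<noteq> j" and K_ij: "K i < K j" and ra_i: "ra i = rb j"
      using ij strict_mono_onD[OF K_mono, of i j] tight(1) rb_j by (auto simp: rax_def)
    show ?thesis
    proof (cases "\<exists>\<omega>\<in>set_pmf M. K i < SC \<omega>")
      case True
      let ?\<Phi> = "static_portfolio B1 N K 0 0 (call_spread i j)"
      have payoff: "p01 ?\<Phi> sb sC sa = (pos (sC - K i) - pos (sC - K j)) / B1" for sb sC sa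
        unfolding p01_static_portfolio sum_call_spread(1)[OF i j \<open>i \<noteq> j\<close>]
        by (simp add: pos_of_nonneg neg_of_nonneg)
      have "init_value N rb ra Sb0 Sa0 ?\<Phi> = 0"
        unfolding init_value_static_portfolio sum_call_spread(2)[OF i j \<open>i \<noteq> j\<close>] using ra_i
        by (simp add: pos_of_nonneg neg_of_nonneg)
      moreover have "\<forall>\<omega>\<in>set_pmf M. 0 \<le> p01 ?\<Phi> (Sb \<omega>) (SC \<omega>) (Sa \<omega>)"
        using K_ij B1 by (simp add: payoff pos_def)
      moreover have "\<exists>\<omega>\<in>set_pmf M. 0 < p01 ?\<Phi> (Sb \<omega>) (SC \<omega>) (Sa \<omega>)"
      proof -
        obtain \<omega> where \<omega>: "\<omega> \<in> set_pmf M" "K i < SC \<omega>"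
          using True by blast
        then have "0 < (pos (SC \<omega> - K i) - pos (SC \<omega> - K j)) / B1"
          using K_ij B1 by (intro divide_pos_pos) (auto simp: pos_def)
        then show ?thesis
          using \<omega>(1) by (auto simp: payoff)
      qed
      ultimately show ?thesis
        by (intro static_portfolio_weak_arbitrage) auto
    next
      case False
      let ?\<Phi> = "static_portfolio B1 N K (rb j) 0 (short_call j)"
      have "p01 ?\<Phi> (Sb \<omega>) (SC \<omega>) (Sa \<omega>) = rb j" if "\<omega> \<in> set_pmf M" for \<omega>
        unfolding p01_static_portfolio sum_short_call(1)[OF j]
        using False that K_ij by (auto simp: pos_def neg_def)
      moreover have "init_value N rb ra Sb0 Sa0 ?\<Phi> = 0"
        unfolding init_value_static_portfolio sum_short_call(2)[OF j] by (simp add: pos_of_nonneg neg_of_nonneg)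
      ultimately show ?thesis
        using \<omega>\<^sub>0 tight(2) rb_j
        by (intro static_portfolio_weak_arbitrage[where a = "rb j" and b = 0 and H = "short_call j"]) auto
    qed
  qed
qed

lemma strike_gt_spread_bound:
  assumes B1: "0 < B1" and K_mono: "strict_mono_on {1..N} K" and k1: "eps < kx eps B1 K 1"
  shows "\<forall>j\<in>{1..N}. eps * B1 < K j"
proof
  fix j assume j: "j \<in> {1..N}"
  have "eps * B1 < K 1"
    using k1 B1 by (simp add: kx_def pos_less_divide_eq)
  also have "K 1 \<le> K j"
    using strict_mono_onD[OF K_mono, of 1 j] j by (cases "j = 1") auto
  finally show "eps * B1 < K j" .
qed

lemma strict_mono_on_kx:
  assumes B1: "0 < B1" and K_mono: "strict_mono_on {1..N} K" and k1: "eps < kx eps B1 K 1"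
  shows "strict_mono_on {..N} (kx eps B1 K)"
proof (rule strict_mono_onI)
  fix i j assume "i \<in> {..N}" "j \<in> {..N}" "i < j"
  then show "kx eps B1 K i < kx eps B1 K j"
    using strike_gt_spread_bound[OF B1 K_mono k1] strict_mono_onD[OF K_mono, of i j] B1
    by (auto simp: kx_def pos_less_divide_eq divide_strict_right_mono)
qed

theorem mainTheorem4:
  fixes eps B1 Sb0 Sa0 :: real and N :: nat and K rb ra :: "nat \<Rightarrow> real"
  assumes B1_pos: "B1 > 0"
    and eps_nonneg: "eps \<ge> 0"
    and K_pos: "N \<ge> 1 \<longrightarrow> K 1 > 0"
    and K_mono: "\<And>i j. 1 \<le> i \<Longrightarrow> i < j \<Longrightarrow> j \<le> N \<Longrightarrow> K i < K j"
    and r_pos: "\<And>i. 1 \<le> i \<Longrightarrow> i \<le> N \<Longrightarrow> rb i > 0 \<and> ra i > 0"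
    and S0: "0 < Sb0" "Sb0 \<le> Sa0"
    and k1: "kx eps B1 K 1 > eps"
    and cond_i: "\<And>i j l. i < j \<Longrightarrow> j < l \<Longrightarrow> l \<le> N \<Longrightarrow>
        (rax ra Sa0 l - rbx eps rb Sb0 j) / (kx eps B1 K l - kx eps B1 K j)
          \<ge> (rbx eps rb Sb0 j - rax ra Sa0 i) / (kx eps B1 K j - kx eps B1 K i)"
    and cond_ii: "\<And>i l. i < l \<Longrightarrow> l \<le> N \<Longrightarrow>
        (rax ra Sa0 l - rbx eps rb Sb0 i) / (kx eps B1 K l - kx eps B1 K i) \<ge> -1"
    and cond_iii: "\<And>i j. i < j \<Longrightarrow> j \<le> N \<Longrightarrow> rbx eps rb Sb0 j \<le> rax ra Sa0 i"
    and tight: "\<exists>i j. i < j \<and> j \<le> N \<and> rax ra Sa0 i = rbx eps rb Sb0 j \<and> rbx eps rb Sb0 j > 0"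
  shows "weak_arbitrage eps B1 N K rb ra Sb0 Sa0"
proof -
  have K_strict: "strict_mono_on {1..N} K"
    using K_mono by (intro strict_mono_onI) auto
  note k_mono = strict_mono_on_kx[OF B1_pos K_strict k1]
    and K_gt = strike_gt_spread_bound[OF B1_pos K_strict k1]
  obtain i j where ij: "i < j" "j \<le> N"
    and tight_ij: "rax ra Sa0 i = rbx eps rb Sb0 j" "0 < rbx eps rb Sb0 j"
    using tight by blast
  have "\<forall>i\<le>N. 0 \<le> rax ra Sa0 i"
    using r_pos S0 by (auto simp: rax_def less_imp_le)
  moreover have "quotes_consistent N (kx eps B1 K) (rax ra Sa0) (rbx eps rb Sb0)"
    using cond_i cond_ii cond_iii by (simp add: quotes_consistent_def)
  ultimately have "\<not> model_independent_arbitrage eps B1 N K rb ra Sb0 Sa0"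
    using ij by (intro no_model_independent_arbitrage[OF B1_pos eps_nonneg _ k_mono]) auto
  moreover note weak_arbitrage_in_model[OF B1_pos K_strict K_gt ij tight_ij]
  ultimately show ?thesis
    unfolding weak_arbitrage_def by blast
qed

end
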